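(* For any $\Delta>0$ there exist a linear mixture MDP structure (feature map and reward) and parameters $\theta^*,\theta^{\mathrm{off},*}$ with $\|\theta^*-\theta^{\mathrm{off},*}\|_2=\Delta$ such that $\sup_\pi|V^\pi_1(s_1)-V^{\mathrm{off},\pi}_1(s_1)|=\Omega(\Delta)$.
   Context: Offline and online linear mixture MDPs share state space, action space, horizon, reward and feature map $\phi$ (with $\sum_{s'}|\phi_j(s'\mid s,a)|\le1$), and have transitions $P(s'\mid s,a)=\langle\theta^*,\phi(s'\mid s,a)\rangle$ and $P^{\mathrm{off}}(s'\mid s,a)=\langle\theta^{\mathrm{off},*},\phi(s'\mid s,a)\rangle$. $V^\pi_1$ and $V^{\mathrm{off},\pi}_1$ are the value functions at stage 1 of policy $\pi$ under $P$ and $P^{\mathrm{off}}$, evaluated at the initial state $s_1$; the supremum is over policies. *)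

theory Defs
  imports "HOL-Analysis.Analysis"
begin

text \<open>Finite-horizon linear mixture MDPs with state space S and action space A
(finite subsets of nat), horizon H (stages 1..H), reward r h s a, feature map
phi s' s a j (j < d, the j-th coordinate of phi(s'|s,a) in R^d) and
parameter theta (coordinates j < d).\<close>

definition lm_trans :: "nat \<Rightarrow> (nat \<Rightarrow> nat \<Rightarrow> nat \<Rightarrow> nat \<Rightarrow> real) \<Rightarrow> (nat \<Rightarrow> real)
    \<Rightarrow> nat \<Rightarrow> nat \<Rightarrow> nat \<Rightarrow> real" where
  "lm_trans d phi theta s' s a = (\<Sum>j<d. theta j * phi s' s a j)"

definition lm_structure :: "nat set \<Rightarrow> nat set \<Rightarrow> nat \<Rightarrow> nat
    \<Rightarrow> (nat \<Rightarrow> nat \<Rightarrow> nat \<Rightarrow> real) \<Rightarrow> (nat \<Rightarrow> nat \<Rightarrow> nat \<Rightarrow> nat \<Rightarrow> real) \<Rightarrow> bool" where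
  "lm_structure S A H d r phi \<longleftrightarrow>
     finite S \<and> S \<noteq> {} \<and> finite A \<and> A \<noteq> {} \<and> H \<ge> 1 \<and>
     (\<forall>h s a. 1 \<le> h \<and> h \<le> H \<and> s \<in> S \<and> a \<in> A \<longrightarrow> 0 \<le> r h s a \<and> r h s a \<le> 1) \<and>
     (\<forall>s a j. s \<in> S \<and> a \<in> A \<and> j < d \<longrightarrow> (\<Sum>s'\<in>S. \<bar>phi s' s a j\<bar>) \<le> 1)"

definition lm_valid_param :: "nat set \<Rightarrow> nat set \<Rightarrow> nat
    \<Rightarrow> (nat \<Rightarrow> nat \<Rightarrow> nat \<Rightarrow> nat \<Rightarrow> real) \<Rightarrow> (nat \<Rightarrow> real) \<Rightarrow> bool" where
  "lm_valid_param S A d phi theta \<longleftrightarrow>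
     (\<forall>s\<in>S. \<forall>a\<in>A. (\<forall>s'\<in>S. 0 \<le> lm_trans d phi theta s' s a) \<and>
                     (\<Sum>s'\<in>S. lm_trans d phi theta s' s a) = 1)"

definition policies :: "nat set \<Rightarrow> nat set \<Rightarrow> nat \<Rightarrow> (nat \<Rightarrow> nat \<Rightarrow> nat) set" where
  "policies S A H = {pol. \<forall>h s. 1 \<le> h \<and> h \<le> H \<and> s \<in> S \<longrightarrow> pol h s \<in> A}"

text \<open>value_togo S H r P pol k s: value of pol from stage H+1-k in state s
(k stages remaining); value_togo ... 0 s = 0 is V_{H+1} = 0.\<close>
fun value_togo :: "nat set \<Rightarrow> nat \<Rightarrow> (nat \<Rightarrow> nat \<Rightarrow> nat \<Rightarrow> real)
    \<Rightarrow> (nat \<Rightarrow> nat \<Rightarrow> nat \<Rightarrow> real) \<Rightarrow> (nat \<Rightarrow> nat \<Rightarrow> nat) \<Rightarrow> nat \<Rightarrow> nat \<Rightarrow> real" where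
  "value_togo S H r P pol 0 s = 0"
| "value_togo S H r P pol (Suc k) s =
     r (H - k) s (pol (H - k) s)
     + (\<Sum>s'\<in>S. P s' s (pol (H - k) s) * value_togo S H r P pol k s')"

definition V1 :: "nat set \<Rightarrow> nat \<Rightarrow> nat \<Rightarrow> (nat \<Rightarrow> nat \<Rightarrow> nat \<Rightarrow> real)
    \<Rightarrow> (nat \<Rightarrow> nat \<Rightarrow> nat \<Rightarrow> nat \<Rightarrow> real) \<Rightarrow> (nat \<Rightarrow> real) \<Rightarrow> (nat \<Rightarrow> nat \<Rightarrow> nat) \<Rightarrow> nat \<Rightarrow> real" where
  "V1 S H d r phi theta pol s = value_togo S H r (lm_trans d phi theta) pol H s"

end

theory Submission
  imports Defs
begin

text \<open>The hard instance has a start state 0 and two absorbing states, a rewarding state 1 and a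
worthless state 2. Feature coordinate j moves the start state to state j + 1, scaled by 1/t so
that parameters of size t are admissible. The parameters (t, 0) and (t - u, u) are at l2-distance
sqrt 2 * u and reach the rewarding state with probabilities 1 and 1 - u/t, so every policy's
value gap is (u/t)(H - 1), which is at least u once the horizon satisfies H - 1 \<ge> t.
Taking u = \<Delta> / sqrt 2 gives the constant 1 / sqrt 2.\<close>

lemma value_togo_absorbing:
  assumes "finite S" "g \<in> S"
    and absorbing: "\<And>s' a. s' \<in> S \<Longrightarrow> P s' g a = (if s' = g then 1 else 0)"
    and reward: "\<And>h a. r h g a = c"
  shows "value_togo S H r P pol k g = c * real k"
proof (induction k)
  case 0
  then show ?case by simp
next
  case (Suc k)
  have "(\<Sum>s'\<in>S. P s' g (pol (H - k) g) * value_togo S H r P pol k s')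
      = (\<Sum>s'\<in>S. if s' = g then value_togo S H r P pol k g else 0)"
    using absorbing by (intro sum.cong) auto
  also have "\<dots> = value_togo S H r P pol k g"
    using assms(1,2) by simp
  finally show ?case
    using Suc.IH by (simp add: reward algebra_simps)
qed

definition goal_reward :: "nat \<Rightarrow> nat \<Rightarrow> nat \<Rightarrow> real" where
  "goal_reward h s a = (if s = 1 then 1 else 0)"

definition split_feature :: "real \<Rightarrow> nat \<Rightarrow> nat \<Rightarrow> nat \<Rightarrow> nat \<Rightarrow> real" where
  "split_feature t s' s a j = (if s' = (if s = 0 then j + 1 else s) then 1 / t else 0)"

lemma lm_trans_split_feature:
  "lm_trans 2 (split_feature t) \<theta> s' s a =
     (if s = 0 then (if s' = 1 then \<theta> 0 / t else if s' = 2 then \<theta> 1 / t else 0)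
      else if s' = s then (\<theta> 0 + \<theta> 1) / t else 0)"
  unfolding lm_trans_def split_feature_def by (auto simp: numeral_2_eq_2 add_divide_distrib)

lemma lm_structure_split_feature:
  assumes "1 \<le> t" "1 \<le> H"
  shows "lm_structure {0, 1, 2} {0} H 2 goal_reward (split_feature t)"
  using assms unfolding lm_structure_def by (auto simp: goal_reward_def split_feature_def)

definition split_param :: "real \<Rightarrow> real \<Rightarrow> nat \<Rightarrow> real" where
  "split_param t u j = (if j = 0 then t - u else u)"

lemma lm_valid_param_split_param:
  assumes "0 \<le> u" "u \<le> t" "0 < t"
  shows "lm_valid_param {0, 1, 2} A 2 (split_feature t) (split_param t u)"
  using assms unfolding lm_valid_param_def lm_trans_split_feature
  by (auto simp: split_param_def simp flip: add_divide_distrib)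

lemma L2_set_split_param_diff:
  "L2_set (\<lambda>j. split_param t 0 j - split_param t u j) {..<2} = sqrt 2 * \<bar>u\<bar>"
  by (simp add: L2_set_def numeral_2_eq_2 split_param_def real_sqrt_mult)

lemma V1_split_param:
  assumes "t \<noteq> 0" "1 \<le> H"
  shows "V1 {0, 1, 2} H 2 goal_reward (split_feature t) (split_param t u) pol 0
           = (t - u) / t * real (H - 1)"
proof -
  obtain k where H: "H = Suc k"
    using assms(2) by (cases H) auto
  let ?V = "value_togo {0, 1, 2} H goal_reward (lm_trans 2 (split_feature t) (split_param t u)) pol k"
  have "?V 1 = 1 * real k" "?V 2 = 0 * real k"
    by (rule value_togo_absorbing;
        use assms(1) in \<open>simp add: lm_trans_split_feature goal_reward_def split_param_def\<close>)+
  then show ?thesis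
    unfolding V1_def H by (simp add: lm_trans_split_feature goal_reward_def split_param_def)
qed

lemma SUP_V1_split_param_gap:
  assumes "0 \<le> u" "0 < t" "1 \<le> H"
  shows "(SUP pol\<in>policies {0, 1, 2} {0} H.
            \<bar>V1 {0, 1, 2} H 2 goal_reward (split_feature t) (split_param t 0) pol 0
             - V1 {0, 1, 2} H 2 goal_reward (split_feature t) (split_param t u) pol 0\<bar>)
         = u / t * real (H - 1)"
proof -
  have gap: "\<bar>V1 {0, 1, 2} H 2 goal_reward (split_feature t) (split_param t 0) pol 0
      - V1 {0, 1, 2} H 2 goal_reward (split_feature t) (split_param t u) pol 0\<bar>
      = u / t * real (H - 1)" for pol
  proof -
    have "(t - 0) / t * real (H - 1) - (t - u) / t * real (H - 1) = u / t * real (H - 1)"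
      using assms by (simp add: field_simps)
    moreover have "0 \<le> u / t * real (H - 1)"
      using assms by simp
    ultimately show ?thesis
      using assms V1_split_param[of t H 0 pol] V1_split_param[of t H u pol] by simp
  qed
  have "(\<lambda>h s. 0) \<in> policies {0, 1, 2} {0} H"
    by (simp add: policies_def)
  then show ?thesis
    unfolding gap by (intro cSUP_const) blast
qed

theorem propositionB2:
  shows "\<exists>c>0. \<forall>\<Delta>::real. \<Delta> > 0 \<longrightarrow>
    (\<exists>S A H d r phi theta theta_off s1.
       lm_structure S A H d r phi \<and> s1 \<in> S \<and>
       lm_valid_param S A d phi theta \<and> lm_valid_param S A d phi theta_off \<and>
       L2_set (\<lambda>j. theta j - theta_off j) {..<d} = \<Delta> \<and>
       (SUP pol\<in>policies S A H.
          \<bar>V1 S H d r phi theta pol s1 - V1 S H d r phi theta_off pol s1\<bar>) \<ge> c * \<Delta>)"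
proof (intro exI[of _ "1 / sqrt 2"] conjI allI impI)
  fix \<Delta> :: real
  assume "\<Delta> > 0"
  define u where "u = \<Delta> / sqrt 2"
  define t where "t = max 1 u"
  define H where "H = nat \<lceil>t\<rceil> + 1"
  have bounds: "0 < u" "u \<le> t" "1 \<le> t" "t \<le> real (H - 1)" "1 \<le> H"
    using \<open>\<Delta> > 0\<close> by (auto simp: u_def t_def H_def intro: le_of_int_ceiling)
  have "1 / sqrt 2 * \<Delta> = u / t * t"
    using bounds by (simp add: u_def)
  also have "\<dots> \<le> u / t * real (H - 1)"
    using bounds by (intro mult_left_mono) auto
  finally have bound: "1 / sqrt 2 * \<Delta> \<le> u / t * real (H - 1)" .
  show "\<exists>S A H d r phi theta theta_off s1.
       lm_structure S A H d r phi \<and> s1 \<in> S \<and>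
       lm_valid_param S A d phi theta \<and> lm_valid_param S A d phi theta_off \<and>
       L2_set (\<lambda>j. theta j - theta_off j) {..<d} = \<Delta> \<and>
       (SUP pol\<in>policies S A H.
          \<bar>V1 S H d r phi theta pol s1 - V1 S H d r phi theta_off pol s1\<bar>) \<ge> 1 / sqrt 2 * \<Delta>"
    by (rule exI[of _ "{0, 1, 2}"], rule exI[of _ "{0}"], rule exI[of _ H], rule exI[of _ 2],
        rule exI[of _ goal_reward], rule exI[of _ "split_feature t"],
        rule exI[of _ "split_param t 0"], rule exI[of _ "split_param t u"], rule exI[of _ 0])
      (use \<open>\<Delta> > 0\<close> bounds bound lm_structure_split_feature[of t H] SUP_V1_split_param_gap[of u t H]
        lm_valid_param_split_param[of 0 t] lm_valid_param_split_param[of u t]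
        L2_set_split_param_diff[of t u] in \<open>simp add: u_def\<close>)
qed simp

end
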